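(* Let $f\in\mathcal{R}$ with $f(z)=z+\sum_{n=2}^\infty a_nz^n$, and let $\gamma_1=\tfrac12 a_2$, $\gamma_2=\tfrac12\left(a_3-\tfrac12 a_2^2\right)$, $\gamma_3=\tfrac12\left(a_4-a_2a_3+\tfrac13 a_2^3\right)$. Then $|\gamma_m|\le \frac{1}{m+1}$ for $m=1,2,3$, and each bound is attained by some $f\in\mathcal{R}$.
   Context: $\mathbb{D}$ is the open unit disk. $\mathcal{A}$ is the class of holomorphic $f$ on $\mathbb{D}$ with $f(0)=0$, $f'(0)=1$. $\mathcal{R}=\{f\in\mathcal{A}:\operatorname{Re} f'(z)>0\ \text{for all } z\in\mathbb{D}\}$ (functions of bounded turning). The $\gamma_n$ are the logarithmic coefficients defined by $\log(f(z)/z)=2\sum_{n\ge1}\gamma_nz^n$. *)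

theory Defs
  imports "HOL-Complex_Analysis.Complex_Analysis"
begin

definition class_A :: "(complex \<Rightarrow> complex) set" where
  "class_A = {f. f holomorphic_on ball 0 1 \<and> f 0 = 0 \<and> deriv f 0 = 1}"

definition class_R :: "(complex \<Rightarrow> complex) set" where
  "class_R = {f \<in> class_A. \<forall>z\<in>ball 0 1. Re (deriv f z) > 0}"

definition coef :: "(complex \<Rightarrow> complex) \<Rightarrow> nat \<Rightarrow> complex" where
  "coef f n = (deriv ^^ n) f 0 / of_nat (fact n)"

definition log_coef :: "(complex \<Rightarrow> complex) \<Rightarrow> nat \<Rightarrow> complex" where
  "log_coef f m =
     (if m = 1 then coef f 2 / 2
      else if m = 2 then (coef f 3 - (coef f 2)^2 / 2) / 2
      else if m = 3 then (coef f 4 - coef f 2 * coef f 3 + (coef f 2)^3 / 3) / 2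
      else 0)"

end

theory Submission
  imports Defs
begin

(*
  Since Re f' > 0 and f'(0) = 1, the Cayley transform (f' - 1) / (f' + 1) is a Schwarz function
  z \<phi>(z) with |\<phi>| \<le> 1 on the disk. Comparing coefficients expresses a_2, a_3, a_4 through the first
  Taylor coefficients \<phi>_0, \<phi>_1, \<phi>_2 of \<phi>, and gives
    \<gamma>_1 = \<phi>_0 / 2,   \<gamma>_2 = \<phi>_1 / 3 + \<phi>_0^2 / 12,   \<gamma>_3 = \<phi>_2 / 4 + \<phi>_0 \<phi>_1 / 6 + \<phi>_0^3 / 12.
  One step of Schur's algorithm (compose \<phi> with the disk automorphism sending \<phi>_0 to 0, then divide
  by z) yields \<phi>_1 = (1 - |\<phi>_0|^2) x and |\<phi>_2| \<le> (1 - |\<phi>_0|^2)(1 - |x|^2 + |\<phi>_0| |x|^2) with |x| \<le> 1;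
  the resulting real inequality in s = |\<phi>_0| and t = |x| is a sum of squares. Equality is attained
  by f' = (1 + z^m) / (1 - z^m), i.e. \<phi>(z) = z^(m-1).
*)

lemma has_fps_expansion_ball:
  assumes "g holomorphic_on ball 0 r" "r > 0"
  shows "g has_fps_expansion fps_expansion g 0"
  using assms by (intro has_fps_expansion_fps_expansion) auto

lemma has_fps_expansion_unique_on_ball:
  fixes f g :: "complex \<Rightarrow> complex"
  assumes "f has_fps_expansion F" "g has_fps_expansion G"
    and "\<And>z. z \<in> ball 0 r \<Longrightarrow> f z = g z" "r > 0"
  shows "F = G"
proof -
  have "eventually (\<lambda>z. f z = g z) (nhds 0)"
    using eventually_nhds_in_open[of "ball 0 r" 0] assms(3,4) by (auto elim: eventually_mono)
  then have "g has_fps_expansion F"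
    using has_fps_expansion_cong assms(1) by blast
  then show ?thesis
    using assms(2) fps_expansion_unique_complex by blast
qed

lemma has_fps_expansion_nth_0:
  fixes f :: "complex \<Rightarrow> complex"
  assumes "f has_fps_expansion F"
  shows "fps_nth F 0 = f 0"
  using fps_nth_fps_expansion[OF assms, of 0] by simp

lemma coef_eq_fps_nth:
  assumes "f holomorphic_on ball 0 1"
  shows "coef f n = fps_nth (fps_expansion f 0) n"
  unfolding coef_def fps_nth_fps_expansion[OF has_fps_expansion_ball[OF assms zero_less_one]] by simp

lemma unit_disc_map_strict_or_constant:
  assumes holo: "g holomorphic_on ball 0 1" and bound: "\<And>z. z \<in> ball 0 1 \<Longrightarrow> norm (g z) \<le> 1"
  shows "(\<forall>z\<in>ball 0 1. norm (g z) < 1) \<or> (\<exists>c. \<forall>z\<in>ball 0 1. g z = c)"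
proof -
  have "\<exists>c. \<forall>z\<in>ball 0 1. g z = c" if not_strict: "\<not> (\<forall>z\<in>ball 0 1. norm (g z) < 1)"
  proof -
    obtain \<xi> where \<xi>: "\<xi> \<in> ball 0 1" "norm (g \<xi>) = 1"
      using not_strict bound by (meson order_le_less)
    have "g constant_on ball 0 1"
      using maximum_modulus_principle[OF holo open_ball connected_ball open_ball subset_refl \<xi>(1)]
        bound \<xi>(2) by auto
    then show ?thesis
      unfolding constant_on_def by blast
  qed
  then show ?thesis by blast
qed

lemma Schwarz_factor:
  assumes holo: "g holomorphic_on ball 0 1" and g0: "g 0 = 0"
    and bound: "\<And>z. z \<in> ball 0 1 \<Longrightarrow> norm (g z) \<le> 1"
  obtains h where "h holomorphic_on ball 0 1" "\<And>z. z \<in> ball 0 1 \<Longrightarrow> g z = z * h z"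
    "\<And>z. z \<in> ball 0 1 \<Longrightarrow> norm (h z) \<le> 1"
  using unit_disc_map_strict_or_constant[OF holo bound]
proof
  assume strict: "\<forall>z\<in>ball 0 1. norm (g z) < 1"
  obtain h where h: "h holomorphic_on ball 0 1" and eq: "\<And>z. norm z < 1 \<Longrightarrow> g z = z * h z"
    and d0: "deriv g 0 = h 0"
    using Schwarz3[OF holo g0] by blast
  have "norm (h z) \<le> 1" if z: "z \<in> ball 0 1" for z
  proof (cases "z = 0")
    case True
    then show ?thesis using d0 Schwarz_Lemma(2)[OF holo g0 _ z[simplified]] strict by simp
  next
    case False
    have "norm (z * h z) \<le> norm z"
      using eq[of z] z Schwarz_Lemma(1)[OF holo g0 _ z[simplified]] strict by simp
    then show ?thesis using False by (simp add: norm_mult)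
  qed
  with h eq that show thesis by auto
next
  assume "\<exists>c. \<forall>z\<in>ball 0 1. g z = c"
  then have "\<forall>z\<in>ball 0 1. g z = 0"
    using g0 by (metis centre_in_ball zero_less_one)
  then show thesis
    using that[of "\<lambda>_. 0"] by auto
qed

lemma norm_diff_le_norm_1_minus_cnj_mult:
  fixes a u :: complex
  assumes a: "norm a \<le> 1" and u: "norm u \<le> 1"
  shows "norm (u - a) \<le> norm (1 - cnj a * u)"
proof -
  have "norm (1 - cnj a * u)^2 - norm (u - a)^2 = (1 - norm a^2) * (1 - norm u^2)"
    by (simp only: cmod_power2) (simp add: power2_eq_square algebra_simps)
  moreover have "0 \<le> (1 - norm a^2) * (1 - norm u^2)"
    using a u by (simp add: abs_square_le_1)
  ultimately have "norm (u - a)^2 \<le> norm (1 - cnj a * u)^2" by linarith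
  then show ?thesis by (rule power2_le_imp_le) simp
qed

lemma fps_nth_Moebius_relation:
  fixes G Q :: "complex fps"
  assumes rel: "fps_X * Q * (1 - fps_const (cnj a) * G) = G - fps_const a" and G0: "fps_nth G 0 = a"
  shows "fps_nth G 1 = (1 - cnj a * a) * fps_nth Q 0"
    and "fps_nth G 2 = (1 - cnj a * a) * (fps_nth Q 1 - cnj a * (fps_nth Q 0)^2)"
proof -
  have c1: "fps_nth (fps_X * Q * (1 - fps_const (cnj a) * G)) 1 = fps_nth (G - fps_const a) 1"
    and c2: "fps_nth (fps_X * Q * (1 - fps_const (cnj a) * G)) 2 = fps_nth (G - fps_const a) 2"
    using rel by simp_all
  show G1: "fps_nth G 1 = (1 - cnj a * a) * fps_nth Q 0"
    using c1 by (simp add: fps_mult_nth G0 mult.commute)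
  have "fps_nth G 2 = (1 - cnj a * a) * fps_nth Q 1 - fps_nth Q 0 * cnj a * fps_nth G 1"
    using c2 by (simp add: fps_mult_nth G0 numeral_2_eq_2 algebra_simps)
  then show "fps_nth G 2 = (1 - cnj a * a) * (fps_nth Q 1 - cnj a * (fps_nth Q 0)^2)"
    unfolding G1 by (simp add: algebra_simps power2_eq_square)
qed

lemma Schur_step:
  assumes holo: "g holomorphic_on ball 0 1" and bound: "\<And>z. z \<in> ball 0 1 \<Longrightarrow> norm (g z) \<le> 1"
  obtains q where "q holomorphic_on ball 0 1" "\<And>z. z \<in> ball 0 1 \<Longrightarrow> norm (q z) \<le> 1"
    "fps_nth (fps_expansion g 0) 1 = of_real (1 - norm (g 0)^2) * fps_nth (fps_expansion q 0) 0"
    "fps_nth (fps_expansion g 0) 2 =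
       of_real (1 - norm (g 0)^2) * (fps_nth (fps_expansion q 0) 1 - cnj (g 0) * (fps_nth (fps_expansion q 0) 0)^2)"
  using unit_disc_map_strict_or_constant[OF holo bound]
proof
  assume strict: "\<forall>z\<in>ball 0 1. norm (g z) < 1"
  define a where "a = g 0"
  have a: "norm a < 1" using strict by (simp add: a_def)
  have den: "1 - cnj a * g z \<noteq> 0" if z: "z \<in> ball 0 1" for z
  proof
    assume "1 - cnj a * g z = 0"
    then have "norm (cnj a * g z) = 1" by simp
    moreover have "norm (cnj a * g z) \<le> norm a"
      using bound[OF z] by (simp add: norm_mult mult_left_le)
    ultimately show False using a by simp
  qed
  define \<psi> where "\<psi> z = (g z - a) / (1 - cnj a * g z)" for z
  have \<psi>_holo: "\<psi> holomorphic_on ball 0 1"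
    unfolding \<psi>_def using holo den by (intro holomorphic_intros) auto
  have \<psi>_0: "\<psi> 0 = 0" by (simp add: \<psi>_def a_def)
  have \<psi>_bound: "norm (\<psi> z) \<le> 1" if z: "z \<in> ball 0 1" for z
    unfolding \<psi>_def norm_divide
    using norm_diff_le_norm_1_minus_cnj_mult[of a "g z"] a bound[OF z] den[OF z]
    by (simp add: divide_le_eq_1)
  obtain q where q: "q holomorphic_on ball 0 1" "\<And>z. z \<in> ball 0 1 \<Longrightarrow> \<psi> z = z * q z"
    "\<And>z. z \<in> ball 0 1 \<Longrightarrow> norm (q z) \<le> 1"
    using Schwarz_factor[OF \<psi>_holo \<psi>_0 \<psi>_bound] by blast
  define G where "G = fps_expansion g 0"
  define Q where "Q = fps_expansion q 0"
  have G: "g has_fps_expansion G" and Q: "q has_fps_expansion Q"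
    unfolding G_def Q_def using holo q(1) by (simp_all add: has_fps_expansion_ball[of _ 1])
  have "fps_X * Q * (1 - fps_const (cnj a) * G) = G - fps_const a"
  proof (rule has_fps_expansion_unique_on_ball)
    show "(\<lambda>z. z * q z * (1 - cnj a * g z)) has_fps_expansion fps_X * Q * (1 - fps_const (cnj a) * G)"
      by (intro has_fps_expansion_mult has_fps_expansion_diff has_fps_expansion_cmult_left
            has_fps_expansion_fps_X has_fps_expansion_1 G Q)
    show "(\<lambda>z. g z - a) has_fps_expansion G - fps_const a"
      by (intro has_fps_expansion_diff has_fps_expansion_const G)
    show "z * q z * (1 - cnj a * g z) = g z - a" if "z \<in> ball 0 1" for z
      unfolding q(2)[OF that, symmetric] \<psi>_def using den[OF that] by simp
  qed (rule zero_less_one)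
  note rel = fps_nth_Moebius_relation[OF this has_fps_expansion_nth_0[OF G, folded a_def]]
  have r: "1 - cnj a * a = of_real (1 - norm a ^ 2)"
    using complex_norm_square[of a] by (simp add: mult.commute)
  show thesis
  proof (rule that[OF q(1,3)])
    show "fps_nth (fps_expansion g 0) 1 = of_real (1 - norm (g 0)^2) * fps_nth (fps_expansion q 0) 0"
      using rel(1) unfolding r unfolding G_def Q_def a_def .
    show "fps_nth (fps_expansion g 0) 2 = of_real (1 - norm (g 0)^2) *
        (fps_nth (fps_expansion q 0) 1 - cnj (g 0) * (fps_nth (fps_expansion q 0) 0)^2)"
      using rel(2) unfolding r unfolding G_def Q_def a_def .
  qed
next
  assume "\<exists>c. \<forall>z\<in>ball 0 1. g z = c"
  then obtain c where const: "\<And>z. z \<in> ball 0 1 \<Longrightarrow> g z = c"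
    by blast
  have "fps_expansion g 0 = fps_const c"
    by (rule has_fps_expansion_unique_on_ball[OF has_fps_expansion_ball[OF holo zero_less_one]
          has_fps_expansion_const const zero_less_one])
  moreover have "fps_expansion (\<lambda>_. 0) 0 = (0 :: complex fps)"
    by (rule fps_expansion_unique_complex[OF has_fps_expansion_ball[of _ 1] has_fps_expansion_0]) auto
  ultimately show thesis
    by (intro that[of "\<lambda>_. 0"]) auto
qed

lemma fps_nth_1_bound:
  assumes "g holomorphic_on ball 0 1" "\<And>z. z \<in> ball 0 1 \<Longrightarrow> norm (g z) \<le> 1"
  shows "norm (fps_nth (fps_expansion g 0) 1) \<le> 1 - norm (g 0)^2"
proof -
  obtain q where q: "q holomorphic_on ball 0 1" "\<And>z. z \<in> ball 0 1 \<Longrightarrow> norm (q z) \<le> 1"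
    and G1: "fps_nth (fps_expansion g 0) 1 = of_real (1 - norm (g 0)^2) * fps_nth (fps_expansion q 0) 0"
    using Schur_step[OF assms] by blast
  have r: "0 \<le> 1 - norm (g 0)^2"
    using assms(2)[of 0] by (simp add: abs_square_le_1)
  have "norm (fps_nth (fps_expansion g 0) 1) = (1 - norm (g 0)^2) * norm (fps_nth (fps_expansion q 0) 0)"
    unfolding G1 norm_mult norm_of_real using r by simp
  also have "\<dots> \<le> (1 - norm (g 0)^2) * 1"
    using q has_fps_expansion_nth_0[OF has_fps_expansion_ball[OF q(1) zero_less_one]] r
    by (intro mult_left_mono) auto
  finally show ?thesis by simp
qed

lemma fps_nth_2_bound:
  assumes "g holomorphic_on ball 0 1" "\<And>z. z \<in> ball 0 1 \<Longrightarrow> norm (g z) \<le> 1"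
  obtains x where "norm x \<le> 1"
    "fps_nth (fps_expansion g 0) 1 = of_real (1 - norm (g 0)^2) * x"
    "norm (fps_nth (fps_expansion g 0) 2) \<le> (1 - norm (g 0)^2) * (1 - norm x^2 + norm (g 0) * norm x^2)"
proof -
  obtain q where q: "q holomorphic_on ball 0 1" "\<And>z. z \<in> ball 0 1 \<Longrightarrow> norm (q z) \<le> 1"
    and G1: "fps_nth (fps_expansion g 0) 1 = of_real (1 - norm (g 0)^2) * fps_nth (fps_expansion q 0) 0"
    and G2: "fps_nth (fps_expansion g 0) 2 = of_real (1 - norm (g 0)^2) *
       (fps_nth (fps_expansion q 0) 1 - cnj (g 0) * (fps_nth (fps_expansion q 0) 0)^2)"
    using Schur_step[OF assms] by blast
  define x where "x = fps_nth (fps_expansion q 0) 0"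
  have x: "x = q 0"
    unfolding x_def using has_fps_expansion_nth_0[OF has_fps_expansion_ball[OF q(1) zero_less_one]] by simp
  have r: "0 \<le> 1 - norm (g 0)^2"
    using assms(2)[of 0] by (simp add: abs_square_le_1)
  have "norm (fps_nth (fps_expansion q 0) 1 - cnj (g 0) * x^2)
      \<le> norm (fps_nth (fps_expansion q 0) 1) + norm (cnj (g 0) * x^2)"
    by (rule norm_triangle_ineq4)
  also have "\<dots> = norm (fps_nth (fps_expansion q 0) 1) + norm (g 0) * norm x^2"
    by (simp add: norm_mult norm_power)
  also have "\<dots> \<le> 1 - norm x^2 + norm (g 0) * norm x^2"
    using fps_nth_1_bound[OF q] x by simp
  finally have "norm (fps_nth (fps_expansion g 0) 2) \<le> (1 - norm (g 0)^2) * (1 - norm x^2 + norm (g 0) * norm x^2)"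
    unfolding G2 x_def[symmetric] norm_mult norm_of_real using r by (simp add: mult_left_mono)
  moreover have "norm x \<le> 1" using q x by simp
  ultimately show thesis
    using that G1[folded x_def] by blast
qed

lemma norm_Cayley_less_1:
  fixes u :: complex
  assumes "Re u > 0"
  shows "u + 1 \<noteq> 0" and "norm ((u - 1) / (u + 1)) < 1"
proof -
  show nz: "u + 1 \<noteq> 0" using assms by (auto simp: complex_eq_iff)
  have "norm (u - 1)^2 < norm (u + 1)^2"
    using assms by (simp only: cmod_power2) (simp add: power2_eq_square algebra_simps)
  then have "norm (u - 1) < norm (u + 1)" by (rule power2_less_imp_less) simp
  then show "norm ((u - 1) / (u + 1)) < 1" using nz by (simp add: norm_divide divide_less_eq_1)
qed

lemma Re_Cayley_inverse_pos:
  fixes u :: complex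
  assumes "norm u < 1"
  shows "Re ((1 + u) / (1 - u)) > 0"
proof -
  have "1 - u \<noteq> 0" using assms by auto
  then have "0 < norm (1 - u) ^ 2" by simp
  moreover have "Re ((1 + u) / (1 - u)) = (1 - norm u ^ 2) / norm (1 - u) ^ 2"
    by (simp only: Re_divide cmod_power2) (simp add: power2_eq_square algebra_simps)
  moreover have "0 < 1 - norm u ^ 2"
    using assms by (simp add: abs_square_less_1)
  ultimately show ?thesis by simp
qed

lemma class_R_Schwarz_representation:
  assumes "f \<in> class_R"
  obtains \<phi> where "\<phi> holomorphic_on ball 0 1" "\<And>z. z \<in> ball 0 1 \<Longrightarrow> norm (\<phi> z) \<le> 1"
    "fps_X * fps_expansion \<phi> 0 * (fps_deriv (fps_expansion f 0) + 1) = fps_deriv (fps_expansion f 0) - 1"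
proof -
  have holo: "f holomorphic_on ball 0 1" and d0: "deriv f 0 = 1"
    and re: "\<And>z. z \<in> ball 0 1 \<Longrightarrow> Re (deriv f z) > 0"
    using assms by (auto simp: class_R_def class_A_def)
  define F where "F = fps_expansion f 0"
  have F': "deriv f has_fps_expansion fps_deriv F"
    unfolding F_def by (rule has_fps_expansion_deriv[OF has_fps_expansion_ball[OF holo zero_less_one]])
  define w where "w z = (deriv f z - 1) / (deriv f z + 1)" for z
  have w_holo: "w holomorphic_on ball 0 1"
    unfolding w_def using holo norm_Cayley_less_1(1)[OF re]
    by (intro holomorphic_intros) auto
  have w_0: "w 0 = 0" using d0 by (simp add: w_def)
  have w_bound: "norm (w z) \<le> 1" if "z \<in> ball 0 1" for z
    using norm_Cayley_less_1(2)[OF re[OF that]] by (simp add: w_def)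
  obtain \<phi> where \<phi>: "\<phi> holomorphic_on ball 0 1" "\<And>z. z \<in> ball 0 1 \<Longrightarrow> w z = z * \<phi> z"
    "\<And>z. z \<in> ball 0 1 \<Longrightarrow> norm (\<phi> z) \<le> 1"
    using Schwarz_factor[OF w_holo w_0 w_bound] by blast
  have "fps_X * fps_expansion \<phi> 0 * (fps_deriv F + 1) = fps_deriv F - 1"
  proof (rule has_fps_expansion_unique_on_ball)
    show "(\<lambda>z. z * \<phi> z * (deriv f z + 1)) has_fps_expansion fps_X * fps_expansion \<phi> 0 * (fps_deriv F + 1)"
      by (intro has_fps_expansion_mult has_fps_expansion_add has_fps_expansion_fps_X
          has_fps_expansion_1 has_fps_expansion_ball[OF \<phi>(1) zero_less_one] F')
    show "(\<lambda>z. deriv f z - 1) has_fps_expansion fps_deriv F - 1"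
      by (intro has_fps_expansion_diff has_fps_expansion_1 F')
    show "z * \<phi> z * (deriv f z + 1) = deriv f z - 1" if "z \<in> ball 0 1" for z
      unfolding \<phi>(2)[OF that, symmetric] w_def using norm_Cayley_less_1(1)[OF re[OF that]] by simp
  qed (rule zero_less_one)
  then show thesis using that \<phi>(1,3) F_def by blast
qed

lemma fps_nth_Cayley_relation:
  fixes F \<Phi> :: "complex fps"
  assumes rel: "fps_X * \<Phi> * (fps_deriv F + 1) = fps_deriv F - 1"
  shows "fps_nth F 1 = 1"
    and "fps_nth F 2 = fps_nth \<Phi> 0"
    and "fps_nth F 3 = 2/3 * (fps_nth \<Phi> 1 + (fps_nth \<Phi> 0)^2)"
    and "fps_nth F 4 = (fps_nth \<Phi> 2 + 2 * fps_nth \<Phi> 0 * fps_nth \<Phi> 1 + (fps_nth \<Phi> 0)^3) / 2"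
proof -
  have c: "fps_nth (fps_X * \<Phi> * (fps_deriv F + 1)) n = fps_nth (fps_deriv F - 1) n" for n
    using rel by simp
  have sums: "{0..1::nat} = {0,1}" "{0..2::nat} = {0,1,2}" "{0..3::nat} = {0,1,2,3}" by auto
  show F1: "fps_nth F 1 = 1"
    using c[of 0] by simp
  show F2: "fps_nth F 2 = fps_nth \<Phi> 0"
    using c[of 1] F1 unfolding fps_mult_nth sums by (simp add: eval_nat_numeral)
  have "fps_nth \<Phi> 0 * (2 * fps_nth F 2) + fps_nth \<Phi> 1 * 2 = 3 * fps_nth F 3"
    using c[of 2] F1 unfolding fps_mult_nth sums by (simp add: eval_nat_numeral)
  then show F3: "fps_nth F 3 = 2/3 * (fps_nth \<Phi> 1 + (fps_nth \<Phi> 0)^2)"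
    unfolding F2 by (simp add: field_simps power2_eq_square)
  have "fps_nth \<Phi> 0 * (3 * fps_nth F 3) + fps_nth \<Phi> 1 * (2 * fps_nth F 2) + fps_nth \<Phi> 2 * 2
      = 4 * fps_nth F 4"
    using c[of 3] F1 unfolding fps_mult_nth sums by (simp add: eval_nat_numeral add.assoc)
  then have F4: "fps_nth F 4
      = (fps_nth \<Phi> 0 * (3 * fps_nth F 3) + fps_nth \<Phi> 1 * (2 * fps_nth F 2) + fps_nth \<Phi> 2 * 2) / 4"
    by (simp add: eq_divide_eq mult.commute)
  show "fps_nth F 4 = (fps_nth \<Phi> 2 + 2 * fps_nth \<Phi> 0 * fps_nth \<Phi> 1 + (fps_nth \<Phi> 0)^3) / 2"
    unfolding F4 F2 F3 by (simp add: field_simps power2_eq_square power3_eq_cube)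
qed

lemma log_coef_class_R:
  assumes "f \<in> class_R"
  obtains \<phi> where "\<phi> holomorphic_on ball 0 1" "\<And>z. z \<in> ball 0 1 \<Longrightarrow> norm (\<phi> z) \<le> 1"
    "log_coef f 1 = \<phi> 0 / 2"
    "log_coef f 2 = fps_nth (fps_expansion \<phi> 0) 1 / 3 + (\<phi> 0)^2 / 12"
    "log_coef f 3 = fps_nth (fps_expansion \<phi> 0) 2 / 4 + \<phi> 0 * fps_nth (fps_expansion \<phi> 0) 1 / 6
       + (\<phi> 0)^3 / 12"
proof -
  obtain \<phi> where \<phi>: "\<phi> holomorphic_on ball 0 1" "\<And>z. z \<in> ball 0 1 \<Longrightarrow> norm (\<phi> z) \<le> 1"
    and rel: "fps_X * fps_expansion \<phi> 0 * (fps_deriv (fps_expansion f 0) + 1) = fps_deriv (fps_expansion f 0) - 1"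
    using class_R_Schwarz_representation[OF assms] by blast
  have "f holomorphic_on ball 0 1"
    using assms by (simp add: class_R_def class_A_def)
  note a = fps_nth_Cayley_relation[OF rel, folded coef_eq_fps_nth[OF this],
      unfolded has_fps_expansion_nth_0[OF has_fps_expansion_ball[OF \<phi>(1) zero_less_one]]]
  show thesis
    by (rule that[OF \<phi>]) (simp_all add: log_coef_def a field_simps power2_eq_square power3_eq_cube)
qed

lemma log_coef_3_polynomial_bound:
  fixes s t :: real
  assumes s: "0 \<le> s" "s \<le> 1"
  shows "(1 - s^2) * (1 - t^2 + s * t^2) / 4 + s * ((1 - s^2) * t) / 6 + s^3 / 12 \<le> 1/4"
proof -
  have sos: "1/4 - ((1 - s^2) * (1 - t^2 + s * t^2) / 4 + s * ((1 - s^2) * t) / 6 + s^3 / 12)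
        = ((1 + s) * ((1 - s) * t - s / 3)^2 + s^2 * (8 - 4 * s) / 9) / 4"
    by (simp add: field_simps power2_eq_square power3_eq_cube)
  have "0 \<le> ((1 + s) * ((1 - s) * t - s / 3)^2 + s^2 * (8 - 4 * s) / 9) / 4"
    using s by simp
  then show ?thesis
    unfolding sos[symmetric] by simp
qed

lemma norm_log_coef_le:
  assumes "f \<in> class_R"
  shows "norm (log_coef f 1) \<le> 1/2" and "norm (log_coef f 2) \<le> 1/3" and "norm (log_coef f 3) \<le> 1/4"
proof -
  obtain \<phi> where \<phi>: "\<phi> holomorphic_on ball 0 1" "\<And>z. z \<in> ball 0 1 \<Longrightarrow> norm (\<phi> z) \<le> 1"
    and \<gamma>: "log_coef f 1 = \<phi> 0 / 2"
      "log_coef f 2 = fps_nth (fps_expansion \<phi> 0) 1 / 3 + (\<phi> 0)^2 / 12"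
      "log_coef f 3 = fps_nth (fps_expansion \<phi> 0) 2 / 4 + \<phi> 0 * fps_nth (fps_expansion \<phi> 0) 1 / 6
         + (\<phi> 0)^3 / 12"
    using log_coef_class_R[OF assms] by blast
  obtain x where x: "norm x \<le> 1"
    and b: "fps_nth (fps_expansion \<phi> 0) 1 = of_real (1 - norm (\<phi> 0)^2) * x"
    and c: "norm (fps_nth (fps_expansion \<phi> 0) 2)
      \<le> (1 - norm (\<phi> 0)^2) * (1 - norm x^2 + norm (\<phi> 0) * norm x^2)"
    using fps_nth_2_bound[OF \<phi>] by blast
  define a where "a = \<phi> 0"
  define s where "s = norm a"
  note \<gamma> = \<gamma>[folded a_def] and b = b[folded a_def s_def] and c = c[folded a_def s_def]
  have s: "0 \<le> s" "s \<le> 1"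
    using \<phi>(2)[of 0] by (simp_all add: s_def a_def)
  have r: "0 \<le> 1 - s^2"
    using s by (simp add: abs_square_le_1)
  have norm_b: "norm (fps_nth (fps_expansion \<phi> 0) 1) = (1 - s^2) * norm x"
    unfolding b norm_mult norm_of_real using r by simp
  show "norm (log_coef f 1) \<le> 1/2"
    unfolding \<gamma>(1) using s by (simp add: norm_divide s_def)
  have "norm (log_coef f 2) \<le> norm (fps_nth (fps_expansion \<phi> 0) 1) / 3 + s^2 / 12"
    unfolding \<gamma>(2) using norm_triangle_ineq[of "fps_nth (fps_expansion \<phi> 0) 1 / 3" "a^2 / 12"]
    by (simp add: norm_divide norm_power s_def)
  also have "\<dots> \<le> (1 - s^2) / 3 + s^2 / 12"
    unfolding norm_b using r x by (simp add: mult_left_le)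
  also have "\<dots> = 1/3 - s^2/4"
    by (simp add: field_simps)
  also have "\<dots> \<le> 1/3"
    by simp
  finally show "norm (log_coef f 2) \<le> 1/3" .
  have "norm (log_coef f 3) \<le> norm (fps_nth (fps_expansion \<phi> 0) 2) / 4
      + s * norm (fps_nth (fps_expansion \<phi> 0) 1) / 6 + s^3 / 12"
    unfolding \<gamma>(3)
    using norm_triangle_ineq[of "fps_nth (fps_expansion \<phi> 0) 2 / 4" "a * fps_nth (fps_expansion \<phi> 0) 1 / 6"]
      norm_triangle_ineq[of "fps_nth (fps_expansion \<phi> 0) 2 / 4 + a * fps_nth (fps_expansion \<phi> 0) 1 / 6"
        "a^3 / 12"]
    by (simp add: norm_divide norm_mult norm_power s_def)
  also have "\<dots> \<le> (1 - s^2) * (1 - norm x^2 + s * norm x^2) / 4 + s * ((1 - s^2) * norm x) / 6 + s^3 / 12"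
    unfolding norm_b using c by simp
  also have "\<dots> \<le> 1/4"
    using log_coef_3_polynomial_bound[OF s] .
  finally show "norm (log_coef f 3) \<le> 1/4" .
qed

lemma class_R_of_derivative:
  assumes holo: "p holomorphic_on ball 0 1" and "p 0 = 1" and "\<And>z. z \<in> ball 0 1 \<Longrightarrow> Re (p z) > 0"
  obtains f where "f \<in> class_R" "\<And>z. z \<in> ball 0 1 \<Longrightarrow> deriv f z = p z"
proof -
  obtain g where g: "\<And>z. z \<in> ball 0 1 \<Longrightarrow> (g has_field_derivative p z) (at z within ball 0 1)"
    using holomorphic_convex_primitive'[OF convex_ball open_ball holo] by blast
  define f where "f z = g z - g 0" for z
  have f': "(f has_field_derivative p z) (at z)" if "z \<in> ball 0 1" for z
    using g[OF that] at_within_open[OF that open_ball] unfolding f_def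
    by (auto intro!: derivative_eq_intros)
  then have "f holomorphic_on ball 0 1"
    using holomorphic_on_open[OF open_ball] by blast
  moreover have "deriv f z = p z" if "z \<in> ball 0 1" for z
    using DERIV_imp_deriv[OF f'[OF that]] .
  ultimately show thesis
    using that[of f] assms(2,3) unfolding class_R_def class_A_def by (simp add: f_def)
qed

lemma fps_nth_mult_1_minus_X_power:
  fixes P :: "'a :: comm_ring_1 fps"
  shows "fps_nth (P * (1 - fps_X ^ k)) n = fps_nth P n - (if k \<le> n then fps_nth P (n - k) else 0)"
proof -
  have "P * (1 - fps_X ^ k) = P - P * fps_X ^ k" by (simp add: algebra_simps)
  then show ?thesis by (simp add: fps_X_power_mult_right_nth)
qed

lemma class_R_extremal:
  fixes k :: nat
  assumes k: "k > 0"
  obtains f where "f \<in> class_R"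
    "\<And>n. n \<in> {1..k} \<Longrightarrow> coef f (Suc n) = (if n = k then 2 / (of_nat k + 1) else 0)"
proof -
  define p where "p z = (1 + z ^ k) / (1 - z ^ k)" for z :: complex
  have lt: "norm (z ^ k) < 1" if "z \<in> ball 0 1" for z :: complex
    using that k by (simp add: norm_power power_less_one_iff)
  then have nz: "1 - z ^ k \<noteq> 0" if "z \<in> ball 0 1" for z :: complex
    using that by force
  have p_holo: "p holomorphic_on ball 0 1"
    unfolding p_def using nz by (intro holomorphic_intros) auto
  have p_0: "p 0 = 1"
    using k by (simp add: p_def zero_power)
  have p_Re: "Re (p z) > 0" if "z \<in> ball 0 1" for z
    unfolding p_def using Re_Cayley_inverse_pos[OF lt[OF that]] .
  obtain f where f: "f \<in> class_R" and f': "\<And>z. z \<in> ball 0 1 \<Longrightarrow> deriv f z = p z"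
    using class_R_of_derivative[OF p_holo p_0 p_Re] by blast
  have f_holo: "f holomorphic_on ball 0 1"
    using f by (simp add: class_R_def class_A_def)
  define F where "F = fps_expansion f 0"
  have F: "f has_fps_expansion F"
    unfolding F_def by (rule has_fps_expansion_ball[OF f_holo zero_less_one])
  have rel: "fps_deriv F * (1 - fps_X ^ k) = 1 + fps_X ^ k"
  proof (rule has_fps_expansion_unique_on_ball)
    show "(\<lambda>z. deriv f z * (1 - z ^ k)) has_fps_expansion fps_deriv F * (1 - fps_X ^ k)"
      by (intro has_fps_expansion_mult has_fps_expansion_diff has_fps_expansion_deriv F
          has_fps_expansion_1 has_fps_expansion_fps_X_power)
    show "(\<lambda>z. 1 + z ^ k) has_fps_expansion 1 + fps_X ^ k"
      by (intro has_fps_expansion_add has_fps_expansion_1 has_fps_expansion_fps_X_power)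
    show "deriv f z * (1 - z ^ k) = 1 + z ^ k" if "z \<in> ball 0 1" for z
      using nz[OF that] by (simp add: f'[OF that] p_def)
  qed (rule zero_less_one)
  have c: "fps_nth (fps_deriv F) n - (if k \<le> n then fps_nth (fps_deriv F) (n - k) else 0)
      = (if n = 0 then 1 else 0) + (if n = k then 1 else 0)" for n
    using arg_cong[OF rel, of "\<lambda>P. fps_nth P n"] unfolding fps_nth_mult_1_minus_X_power by simp
  have F'_0: "fps_nth (fps_deriv F) 0 = 1"
    using c[of 0] k by simp
  have "coef f (Suc n) = (if n = k then 2 / (of_nat k + 1) else 0)" if n: "n \<in> {1..k}" for n
  proof -
    have "of_nat (Suc n) * fps_nth F (Suc n) = (if n = k then 2 else 0)"
      using c[of n] F'_0 n by auto
    then have "fps_nth F (Suc n) = (if n = k then 2 else 0) / of_nat (Suc n)"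
      by (simp add: eq_divide_eq mult.commute del: of_nat_Suc)
    then show ?thesis
      unfolding coef_eq_fps_nth[OF f_holo] F_def[symmetric] by simp
  qed
  with f that show thesis by blast
qed

lemma log_coef_extremal:
  assumes "m \<in> {1, 2, 3}"
  shows "\<exists>f\<in>class_R. log_coef f m = 1 / (of_nat m + 1)"
proof -
  have "m > 0" using assms by auto
  then obtain f where f: "f \<in> class_R"
    and a: "\<And>n. n \<in> {1..m} \<Longrightarrow> coef f (Suc n) = (if n = m then 2 / (of_nat m + 1) else 0)"
    using class_R_extremal by blast
  have "log_coef f m = 1 / (of_nat m + 1)"
    using assms a[of 1] a[of 2] a[of 3] by (auto simp: log_coef_def numeral_eq_Suc)
  with f show ?thesis by blast
qed

theorem mainTheorem2:
  shows "\<forall>m\<in>{1,2,3::nat}.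
           (\<forall>f\<in>class_R. norm (log_coef f m) \<le> 1 / (real m + 1)) \<and>
           (\<exists>f\<in>class_R. norm (log_coef f m) = 1 / (real m + 1))"
proof
  fix m :: nat assume m: "m \<in> {1, 2, 3}"
  have bound: "\<forall>f\<in>class_R. norm (log_coef f m) \<le> 1 / (real m + 1)"
    using m norm_log_coef_le by auto
  obtain f where f: "f \<in> class_R" and \<gamma>: "log_coef f m = 1 / (of_nat m + 1)"
    using log_coef_extremal[OF m] by blast
  have "norm (log_coef f m) = 1 / (real m + 1)"
    unfolding \<gamma> using norm_of_nat[of "Suc m"] by (simp add: norm_divide add_ac)
  with f bound show "(\<forall>f\<in>class_R. norm (log_coef f m) \<le> 1 / (real m + 1)) \<and>
      (\<exists>f\<in>class_R. norm (log_coef f m) = 1 / (real m + 1))"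
    by blast
qed

end
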